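(* Let $F$ be a field of characteristic zero and $n,m$ natural numbers. If an ideal $I$ of $W(n,m)$ contains $\partial_i$ for some $1\le i\le n+m$, then $I=W(n,m)$.
   Context: $W(n,m)$ has basis $e^{\alpha}x^{\beta}\partial_i$ ($\alpha\in\mathbb Z^n$, $\beta\in\mathbb Z^{n+m}$, $1\le i\le n+m$), realized as vector fields $f\partial_i$ with $f$ in the commutative algebra with basis $e^{\alpha}x^{\beta}$ (multiplication adding exponents), $\partial_i(e^{\alpha}x^{\beta})=a_ie^{\alpha}x^{\beta}+b_ie^{\alpha}x^{\beta-\epsilon_i}$ with $a_i:=0$ for $i>n$, and bracket $[f\partial_i,g\partial_j]=f\partial_i(g)\partial_j-g\partial_j(f)\partial_i$; $\partial_i$ denotes the basis element $e^{0}x^{0}\partial_i$. *)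

theory Defs
  imports Main "HOL-Library.Function_Algebras"
begin

text \<open>Basis index (alpha, beta, i) of e^alpha x^beta d_i; alpha, beta are integer vectors
  encoded as functions nat => int vanishing outside {0..<n} resp. {0..<n+m};
  i is 0-based, i < n+m.\<close>
type_synonym widx = "(nat \<Rightarrow> int) \<times> (nat \<Rightarrow> int) \<times> nat"

definition Bidx :: "nat \<Rightarrow> nat \<Rightarrow> widx set" where
  "Bidx n m = {(a, b, i). (\<forall>k\<ge>n. a k = 0) \<and> (\<forall>k\<ge>n+m. b k = 0) \<and> i < n + m}"

definition Wset :: "nat \<Rightarrow> nat \<Rightarrow> (widx \<Rightarrow> 'a::field) set" where
  "Wset n m = {u. finite {p. u p \<noteq> 0} \<and> (\<forall>p. u p \<noteq> 0 \<longrightarrow> p \<in> Bidx n m)}"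

definition bv :: "widx \<Rightarrow> widx \<Rightarrow> 'a::field" where
  "bv r = (\<lambda>s. if s = r then 1 else 0)"

definition smul :: "'a::field \<Rightarrow> (widx \<Rightarrow> 'a) \<Rightarrow> (widx \<Rightarrow> 'a)" where
  "smul c u = (\<lambda>s. c * u s)"

text \<open>Bracket of basis elements:
 [e^a x^b d_i, e^c x^d d_j] = c_i e^(a+c) x^(b+d) d_j + d_i e^(a+c) x^(b+d-eps_i) d_j
   - a_j e^(a+c) x^(b+d) d_i - b_j e^(a+c) x^(b+d-eps_j) d_i
 (a_k = c_k = 0 for k >= n automatically, matching a_i := 0 for i > n).\<close>
definition br_basis :: "widx \<Rightarrow> widx \<Rightarrow> widx \<Rightarrow> 'a::field" where
  "br_basis p q = (case p of (a, b, i) \<Rightarrow> case q of (c, d, j) \<Rightarrow>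
      let s = (\<lambda>k. a k + c k); t = (\<lambda>k. b k + d k) in
        smul (of_int (c i)) (bv (s, t, j))
      + smul (of_int (d i)) (bv (s, t(i := t i - 1), j))
      - smul (of_int (a j)) (bv (s, t, i))
      - smul (of_int (b j)) (bv (s, t(j := t j - 1), i)))"

definition wbracket :: "(widx \<Rightarrow> 'a::field) \<Rightarrow> (widx \<Rightarrow> 'a) \<Rightarrow> (widx \<Rightarrow> 'a)" where
  "wbracket u v = (\<Sum>p\<in>{p. u p \<noteq> 0}. \<Sum>q\<in>{q. v q \<noteq> 0}. smul (u p * v q) (br_basis p q))"

text \<open>The basis element d_i = e^0 x^0 d_i (0-based index i).\<close>
definition wpartial :: "nat \<Rightarrow> widx \<Rightarrow> 'a::field" where
  "wpartial i = bv (\<lambda>_. 0, \<lambda>_. 0, i)"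

definition is_W_ideal :: "nat \<Rightarrow> nat \<Rightarrow> (widx \<Rightarrow> 'a::field) set \<Rightarrow> bool" where
  "is_W_ideal n m I \<longleftrightarrow> I \<subseteq> Wset n m \<and> 0 \<in> I
     \<and> (\<forall>u\<in>I. \<forall>v\<in>I. u + v \<in> I)
     \<and> (\<forall>c. \<forall>u\<in>I. smul c u \<in> I)
     \<and> (\<forall>w\<in>Wset n m. \<forall>u\<in>I. wbracket w u \<in> I)"

end

theory Submission
  imports Defs
begin

text \<open>Since
  \<open>[x\<^sub>i \<partial>\<^sub>j, \<partial>\<^sub>i] = -\<partial>\<^sub>j\<close> and \<open>[x\<^sub>j\<^sup>2 \<partial>\<^sub>j, \<partial>\<^sub>j] = -2 x\<^sub>j \<partial>\<^sub>j\<close>, an ideal containing one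
  \<open>\<partial>\<^sub>i\<close> contains every \<open>\<partial>\<^sub>j\<close> and every \<open>x\<^sub>j \<partial>\<^sub>j\<close>. For an arbitrary basis element,
  \<open>[e\<^sup>a x\<^sup>b \<partial>\<^sub>j, x\<^sub>j \<partial>\<^sub>j] - [e\<^sup>a x\<^sup>b x\<^sub>j \<partial>\<^sub>j, \<partial>\<^sub>j] = 2 e\<^sup>a x\<^sup>b \<partial>\<^sub>j\<close>, because the terms
  involving \<open>a\<^sub>j\<close> and \<open>b\<^sub>j\<close> cancel; as \<open>2 \<noteq> 0\<close>, the ideal contains the whole basis
  and hence everything.\<close>

lemma sum_fun_apply: "(\<Sum>p\<in>S. f p) x = (\<Sum>p\<in>S. f p x)"
  by (induction S rule: infinite_finite_induct) auto

lemma smul_one [simp]: "smul 1 u = u"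
  by (simp add: smul_def)

lemma smul_smul [simp]: "smul c (smul d u) = smul (c * d) u"
  by (simp add: smul_def mult.assoc)

lemma support_bv: "{s. (bv r s :: 'a::field) \<noteq> 0} = {r}"
  by (auto simp: bv_def)

lemma bv_in_Wset: "p \<in> Bidx n m \<Longrightarrow> (bv p :: widx \<Rightarrow> 'a::field) \<in> Wset n m"
  unfolding Wset_def by (auto simp: support_bv) (auto simp: bv_def split: if_splits)

lemma Wset_eq_sum_bv:
  assumes "u \<in> Wset n m"
  shows "u = (\<Sum>p\<in>{p. u p \<noteq> 0}. smul (u p) (bv p))"
proof
  fix x
  have fin: "finite {p. u p \<noteq> 0}"
    using assms by (simp add: Wset_def)
  have "(\<Sum>p\<in>{p. u p \<noteq> 0}. smul (u p) (bv p)) x = (\<Sum>p\<in>{p. u p \<noteq> 0}. if p = x then u x else 0)"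
    unfolding sum_fun_apply by (rule sum.cong) (auto simp: smul_def bv_def)
  also have "\<dots> = u x"
    using fin by (simp add: sum.delta')
  finally show "u x = (\<Sum>p\<in>{p. u p \<noteq> 0}. smul (u p) (bv p)) x" ..
qed

lemma wbracket_bv: "wbracket (bv p) (bv q) = (br_basis p q :: widx \<Rightarrow> 'a::field)"
  unfolding wbracket_def by (simp add: support_bv bv_def)

definition eps :: "nat \<Rightarrow> nat \<Rightarrow> int" where
  "eps j = (\<lambda>_. 0)(j := 1)"

lemma br_basis_x_partial_partial:
  "br_basis (\<lambda>_. 0, eps i, j) (\<lambda>_. 0, \<lambda>_. 0, i) = smul (-1) (wpartial j :: widx \<Rightarrow> 'a::field)"
proof -
  have "(\<lambda>k. eps i k + 0)(i := eps i i + 0 - 1) = (\<lambda>_. 0)"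
    by (auto simp: eps_def)
  then show ?thesis
    unfolding br_basis_def Let_def wpartial_def by (auto simp: fun_eq_iff smul_def bv_def eps_def)
qed

lemma br_basis_x2_partial_partial:
  "br_basis (\<lambda>_. 0, 2 * eps j, j) (\<lambda>_. 0, \<lambda>_. 0, j) = smul (-2) (bv (\<lambda>_. 0, eps j, j) :: widx \<Rightarrow> 'a::field)"
proof -
  have "(\<lambda>k. (2 * eps j) k + 0)(j := (2 * eps j) j + 0 - 1) = eps j"
    by (auto simp: eps_def fun_eq_iff)
  then show ?thesis
    unfolding br_basis_def Let_def by (auto simp: fun_eq_iff smul_def bv_def eps_def)
qed

lemma br_basis_x_partial_right:
  "br_basis (a, b, j) (\<lambda>_. 0, eps j, j)
     = smul (1 - of_int (b j)) (bv (a, b, j)) - smul (of_int (a j)) (bv (a, b + eps j, j) :: widx \<Rightarrow> 'a::field)"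
proof -
  have "(\<lambda>k. b k + eps j k)(j := b j + eps j j - 1) = b" "(\<lambda>k. b k + eps j k) = b + eps j"
    by (auto simp: eps_def fun_eq_iff)
  then show ?thesis
    unfolding br_basis_def Let_def by (auto simp: fun_eq_iff smul_def bv_def eps_def algebra_simps)
qed

lemma br_basis_partial_right:
  "br_basis (a, b + eps j, j) (\<lambda>_. 0, \<lambda>_. 0, j)
     = smul (- of_int (a j)) (bv (a, b + eps j, j)) - smul (of_int (b j + 1)) (bv (a, b, j) :: widx \<Rightarrow> 'a::field)"
proof -
  have "(\<lambda>k. (b + eps j) k + 0)(j := (b + eps j) j + 0 - 1) = b" "(\<lambda>k. (b + eps j) k + 0) = b + eps j"
    by (auto simp: eps_def fun_eq_iff)
  then show ?thesis
    unfolding br_basis_def Let_def by (auto simp: fun_eq_iff smul_def bv_def eps_def algebra_simps)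
qed

lemma br_basis_Euler_difference:
  "br_basis (a, b, j) (\<lambda>_. 0, eps j, j) - br_basis (a, b + eps j, j) (\<lambda>_. 0, \<lambda>_. 0, j)
     = smul 2 (bv (a, b, j) :: widx \<Rightarrow> 'a::field)"
  unfolding br_basis_x_partial_right br_basis_partial_right
  by (auto simp: fun_eq_iff smul_def algebra_simps)

context
  fixes n m :: nat and I :: "(widx \<Rightarrow> 'a::field) set"
  assumes ideal: "is_W_ideal n m I"
begin

lemma W_ideal_add: "u \<in> I \<Longrightarrow> v \<in> I \<Longrightarrow> u + v \<in> I"
  using ideal by (simp add: is_W_ideal_def)

lemma W_ideal_smul: "u \<in> I \<Longrightarrow> smul c u \<in> I"
  using ideal by (simp add: is_W_ideal_def)

lemma W_ideal_diff:
  assumes "u \<in> I" "v \<in> I"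
  shows "u - v \<in> I"
proof -
  have "u - v = u + smul (-1) v"
    by (simp add: fun_eq_iff smul_def)
  then show ?thesis
    using assms by (metis W_ideal_add W_ideal_smul)
qed

lemma W_ideal_smul_cancel: "smul c u \<in> I \<Longrightarrow> c \<noteq> 0 \<Longrightarrow> u \<in> I"
  using W_ideal_smul[of "smul c u" "inverse c"] by simp

lemma W_ideal_sum: "(\<And>p. p \<in> S \<Longrightarrow> f p \<in> I) \<Longrightarrow> (\<Sum>p\<in>S. f p) \<in> I"
proof (induction S rule: infinite_finite_induct)
  case (infinite S)
  then show ?case
    using ideal by (simp add: is_W_ideal_def zero_fun_def)
next
  case empty
  then show ?case
    using ideal by (simp add: is_W_ideal_def zero_fun_def)
next
  case (insert p S)
  then have "f p + (\<Sum>p\<in>S. f p) \<in> I"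
    by (intro W_ideal_add) auto
  with insert.hyps show ?case
    by (metis sum.insert)
qed

lemma W_ideal_br_basis: "p \<in> Bidx n m \<Longrightarrow> bv q \<in> I \<Longrightarrow> br_basis p q \<in> I"
  using ideal bv_in_Wset[of p n m] by (auto simp: is_W_ideal_def simp flip: wbracket_bv)

lemma W_ideal_eq_Wset_if_basis:
  assumes "\<And>p. p \<in> Bidx n m \<Longrightarrow> bv p \<in> I"
  shows "I = Wset n m"
proof
  show "I \<subseteq> Wset n m"
    using ideal by (simp add: is_W_ideal_def)
  show "Wset n m \<subseteq> I"
  proof
    fix u :: "widx \<Rightarrow> 'a"
    assume u: "u \<in> Wset n m"
    have "smul (u p) (bv p) \<in> I" if "u p \<noteq> 0" for p
    proof -
      have "p \<in> Bidx n m"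
        using u that unfolding Wset_def by blast
      then show ?thesis
        by (intro W_ideal_smul assms)
    qed
    then show "u \<in> I"
      by (subst Wset_eq_sum_bv[OF u]) (rule W_ideal_sum, simp)
  qed
qed

lemma W_ideal_wpartial:
  assumes "wpartial i \<in> I" "i < n + m" "j < n + m"
  shows "wpartial j \<in> I"
proof -
  have "br_basis (\<lambda>_. 0, eps i, j) (\<lambda>_. 0, \<lambda>_. 0, i) \<in> I"
    using assms by (intro W_ideal_br_basis) (auto simp: wpartial_def Bidx_def eps_def)
  then show ?thesis
    by (simp add: br_basis_x_partial_partial W_ideal_smul_cancel)
qed

lemma W_ideal_x_partial:
  assumes "(2::'a) \<noteq> 0" "wpartial j \<in> I" "j < n + m"
  shows "bv (\<lambda>_. 0, eps j, j) \<in> I"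
proof -
  have "br_basis (\<lambda>_. 0, 2 * eps j, j) (\<lambda>_. 0, \<lambda>_. 0, j) \<in> I"
    using assms by (intro W_ideal_br_basis) (auto simp: wpartial_def Bidx_def eps_def)
  with assms(1) show ?thesis
    by (simp add: br_basis_x2_partial_partial W_ideal_smul_cancel)
qed

lemma W_ideal_bv_if_wpartials:
  assumes two: "(2::'a) \<noteq> 0" and partials: "\<And>j. j < n + m \<Longrightarrow> wpartial j \<in> I"
    and p: "(a, b, j) \<in> Bidx n m"
  shows "bv (a, b, j) \<in> I"
proof -
  have j: "j < n + m" and p': "(a, b + eps j, j) \<in> Bidx n m"
    using p by (auto simp: Bidx_def eps_def)
  have "br_basis (a, b, j) (\<lambda>_. 0, eps j, j) \<in> I"
    using p j two partials W_ideal_x_partial W_ideal_br_basis by blast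
  moreover have "br_basis (a, b + eps j, j) (\<lambda>_. 0, \<lambda>_. 0, j) \<in> I"
    using p' j partials W_ideal_br_basis by (simp add: wpartial_def)
  ultimately have "smul 2 (bv (a, b, j)) \<in> I"
    by (metis W_ideal_diff br_basis_Euler_difference)
  then show ?thesis
    using two by (rule W_ideal_smul_cancel)
qed

end

theorem lemma2:
  fixes n m :: nat and I :: "(widx \<Rightarrow> 'a::field_char_0) set" and i :: nat
  assumes "is_W_ideal n m I"
    and "i < n + m"
    and "wpartial i \<in> I"
  shows "I = Wset n m"
proof (rule W_ideal_eq_Wset_if_basis[OF assms(1)])
  fix p
  assume "p \<in> Bidx n m"
  moreover have "wpartial j \<in> I" if "j < n + m" for j
    using W_ideal_wpartial[OF assms(1,3,2) that] .
  ultimately show "bv p \<in> I"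
    using W_ideal_bv_if_wpartials[OF assms(1)] by (cases p) auto
qed

end
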